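(* Let $f:\mathbb{R}^n_{>0}\to\mathbb{R}^n_{>0}$ be order-preserving and homogeneous. Then (the continuous extension of) $f$ has an eigenvector $y\in(0,\infty]^n$ with $y_i<\infty$ for some $i\in[n]$ such that $f(y)=\lambda(f)y$.
   Context: Entrywise order. Order-preserving: $x\le y\Rightarrow f(x)\le f(y)$; homogeneous: $f(tx)=tf(x)$ for $t>0$. Such $f$ extends continuously (order topology on extended reals) to an order-preserving homogeneous map $(0,\infty]^n\to(0,\infty]^n$, again denoted $f$, with conventions $c\cdot\infty=\infty$ for $c>0$. $\lambda(f)=\sup_{x\in\mathbb{R}^n_{>0}}\min_if(x)_i/x_i$. *)

theory Defs
  imports "HOL-Analysis.Analysis"
begin

text \<open>Vectors in R^n are modelled as real ^ 'n (the dimension n = CARD('n));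
  vectors in (0,\<infinity>]^n as ereal ^ 'n.\<close>

definition pos_vec :: "real ^ 'n \<Rightarrow> bool" where
  "pos_vec x \<longleftrightarrow> (\<forall>i. 0 < x $ i)"

definition maps_pos :: "(real ^ 'n \<Rightarrow> real ^ 'n) \<Rightarrow> bool" where
  "maps_pos f \<longleftrightarrow> (\<forall>x. pos_vec x \<longrightarrow> pos_vec (f x))"

definition order_preserving :: "(real ^ 'n \<Rightarrow> real ^ 'n) \<Rightarrow> bool" where
  "order_preserving f \<longleftrightarrow>
     (\<forall>x y. pos_vec x \<longrightarrow> pos_vec y \<longrightarrow> (\<forall>i. x $ i \<le> y $ i) \<longrightarrow> (\<forall>i. f x $ i \<le> f y $ i))"

definition homogeneous :: "(real ^ 'n \<Rightarrow> real ^ 'n) \<Rightarrow> bool" where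
  "homogeneous f \<longleftrightarrow> (\<forall>x t. pos_vec x \<longrightarrow> 0 < t \<longrightarrow> f (t *s x) = t *s f x)"

definition cw_lambda :: "(real ^ 'n::finite \<Rightarrow> real ^ 'n) \<Rightarrow> real" where
  "cw_lambda f = Sup {Min (range (\<lambda>i. f x $ i / x $ i)) | x. pos_vec x}"

text \<open>The (continuous, order-preserving) extension of f to (0,\<infinity>]^n:
  each coordinate is the supremum of f over the positive real vectors below the point.
  On positive real vectors this agrees with f, by monotonicity.\<close>
definition ext_map :: "(real ^ 'n \<Rightarrow> real ^ 'n) \<Rightarrow> ereal ^ 'n \<Rightarrow> ereal ^ 'n" where
  "ext_map f y = (\<chi> i. SUP x\<in>{x. pos_vec x \<and> (\<forall>j. ereal (x $ j) \<le> y $ j)}. ereal (f x $ i))"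

end

theory Submission
  imports Defs
begin

text \<open>
  Order-preserving homogeneous maps are continuous on the open cone. Hence, for \<open>\<epsilon> > 0\<close>,
  Brouwer's theorem applied to \<open>u \<mapsto> 1 / f (1 / (u + \<epsilon>))\<close> (entrywise reciprocals),
  normalised to the standard simplex, gives \<open>f (1 / (u\<^sub>\<epsilon> + \<epsilon>)) = \<rho>\<^sub>\<epsilon> / u\<^sub>\<epsilon>\<close>.
  Comparison with Collatz--Wielandt ratios shows \<open>\<rho>\<^sub>\<epsilon> \<le> \<lambda>(f)\<close> and \<open>\<rho>\<^sub>\<epsilon> \<rightarrow> \<lambda>(f)\<close>.
  If \<open>u\<^sub>\<epsilon> \<rightarrow> v\<close> along a subsequence, then \<open>y = 1 / v\<close> (with \<open>1 / 0 = \<infinity>\<close>) is the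
  eigenvector: the positive \<open>x \<le> y\<close> are those with \<open>x\<^sub>j v\<^sub>j \<le> 1\<close>, and up to factors close
  to one they are dominated by, and include, the vectors \<open>1 / (u\<^sub>\<epsilon> + \<epsilon>)\<close>; so the
  supremum of \<open>f(x)\<^sub>i\<close> over them is \<open>\<lambda>(f) / v\<^sub>i\<close>. Some \<open>y\<^sub>i\<close> is finite as \<open>v\<close> sums to one.
\<close>

lemma ereal_le_mult_inverse_iff:
  assumes "0 \<le> b" and "0 < c"
  shows "ereal a \<le> ereal c * inverse (ereal b) \<longleftrightarrow> a * b \<le> c"
  using assms by (cases "b = 0") (auto simp: field_simps)

lemma ereal_less_mult_inverse_iff:
  assumes "0 \<le> b" and "0 < c"
  shows "ereal a < ereal c * inverse (ereal b) \<longleftrightarrow> a * b < c"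
  using assms by (cases "b = 0") (auto simp: field_simps)

lemma exists_argmax_finite: "\<exists>k. \<forall>j. g j \<le> g k" for g :: "'a::finite \<Rightarrow> 'b::linorder"
proof -
  obtain k where "g k = Max (range g)"
    by (metis (mono_tags) Max_in UNIV_not_empty finite finite_imageI image_iff image_is_empty)
  then show ?thesis
    by (metis Max_ge finite UNIV_I finite_imageI image_eqI)
qed

lemma exists_gt_one_mult_less:
  fixes a b :: real
  assumes "a < b"
  shows "\<exists>t>1. a * t < b"
proof -
  have "((\<lambda>t. a * t) \<longlongrightarrow> a * 1) (at_right 1)"
    by (intro tendsto_intros)
  then have "\<forall>\<^sub>F t in at_right 1. a * t < b"
    by (rule order_tendstoD(2)) (use assms in simp)
  then show ?thesis
    using eventually_happens'[OF trivial_limit_at_right_real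
        eventually_conj[OF eventually_at_right_less]] by blast
qed

lemma pos_vec_scale: "pos_vec x \<Longrightarrow> 0 < t \<Longrightarrow> pos_vec (t *s x)"
  unfolding pos_vec_def by simp

lemma pos_vec_one: "pos_vec 1"
  unfolding pos_vec_def by simp

definition unit_simplex :: "(real ^ 'n::finite) set" where
  "unit_simplex = {u. (\<forall>i. 0 \<le> u $ i) \<and> (\<Sum>i\<in>UNIV. u $ i) = 1}"

lemma unit_simplex_component_le_one: "u \<in> unit_simplex \<Longrightarrow> u $ i \<le> 1"
  unfolding unit_simplex_def by (metis (mono_tags, lifting) UNIV_I finite mem_Collect_eq member_le_sum)

lemma unit_simplex_nonzero_component: "u \<in> unit_simplex \<Longrightarrow> \<exists>i. u $ i \<noteq> 0"
  by (rule ccontr) (simp add: unit_simplex_def)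

lemma compact_unit_simplex: "compact unit_simplex"
proof (rule compact_eq_bounded_closed[THEN iffD2, OF conjI])
  have "unit_simplex \<subseteq> cbox 0 1"
    by (intro subsetI)
      (auto simp: mem_box_cart unit_simplex_component_le_one, simp add: unit_simplex_def)
  then show "bounded unit_simplex"
    using bounded_cbox bounded_subset by blast
  have "unit_simplex = {x. \<forall>i. 0 \<le> x $ i} \<inter> {u. (\<Sum>i\<in>UNIV. u $ i) = 1}"
    unfolding unit_simplex_def by auto
  moreover have "closed {u :: real ^ 'n. (\<Sum>i\<in>UNIV. u $ i) = 1}"
    by (intro closed_Collect_eq continuous_intros)
  ultimately show "closed unit_simplex"
    using closed_Int closed_positive_orthant by metis
qed

lemma convex_unit_simplex: "convex unit_simplex"
  unfolding convex_def unit_simplex_def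
  by (auto simp: sum.distrib sum_distrib_left[symmetric])

lemma unit_simplex_nonempty: "unit_simplex \<noteq> {}"
proof -
  have "(\<chi> i. 1 / real CARD('n)) \<in> (unit_simplex :: (real ^ 'n::finite) set)"
    unfolding unit_simplex_def by simp
  then show ?thesis by blast
qed

lemma brouwer_unit_simplex_eigenvector:
  fixes g :: "real ^ 'n::finite \<Rightarrow> real ^ 'n"
  assumes cont: "continuous_on unit_simplex g" and pos: "\<And>u i. u \<in> unit_simplex \<Longrightarrow> 0 < g u $ i"
  obtains u s where "u \<in> unit_simplex" and "0 < s" and "g u = s *s u"
proof -
  define \<Phi> where "\<Phi> u = (1 / (\<Sum>i\<in>UNIV. g u $ i)) *s g u" for u
  have g_sum_pos: "0 < (\<Sum>i\<in>UNIV. g u $ i)" if "u \<in> unit_simplex" for u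
    using pos[OF that] by (simp add: sum_pos)
  have cont_\<Phi>: "continuous_on unit_simplex \<Phi>"
    unfolding \<Phi>_def vector_scalar_mult_def
    by (intro continuous_intros cont continuous_on_component)
      (use g_sum_pos in \<open>auto simp: less_le\<close>)
  have \<Phi>_maps: "\<Phi> u \<in> unit_simplex" if "u \<in> unit_simplex" for u
    using pos[OF that] g_sum_pos[OF that]
    by (auto simp: \<Phi>_def unit_simplex_def less_imp_le sum_divide_distrib[symmetric])
  obtain u where u: "u \<in> unit_simplex" and fix_u: "\<Phi> u = u"
    by (rule brouwer[OF compact_unit_simplex convex_unit_simplex unit_simplex_nonempty cont_\<Phi>
          funcsetI[OF \<Phi>_maps]])
  define S where "S = (\<Sum>i\<in>UNIV. g u $ i)"
  have "g u $ i = S * u $ i" for i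
  proof -
    have "g u $ i / S = u $ i"
      using arg_cong[OF fix_u, of "\<lambda>w. w $ i"] by (simp add: \<Phi>_def S_def)
    then show ?thesis
      using g_sum_pos[OF u] by (simp add: S_def divide_eq_eq mult.commute)
  qed
  then have "g u = S *s u"
    by (simp add: vec_eq_iff)
  with u g_sum_pos[OF u] show thesis
    unfolding S_def by (rule that)
qed

definition shifted_recip :: "real \<Rightarrow> real ^ 'n::finite \<Rightarrow> real ^ 'n" where
  "shifted_recip e u = (\<chi> j. 1 / (u $ j + e))"

lemma pos_vec_shifted_recip: "0 < e \<Longrightarrow> u \<in> unit_simplex \<Longrightarrow> pos_vec (shifted_recip e u)"
  unfolding shifted_recip_def pos_vec_def unit_simplex_def by (simp add: add_nonneg_pos)

lemma component_le_sum_mult_sum_inverse: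
  assumes x: "pos_vec x" and u: "u \<in> unit_simplex" and s: "\<And>j. x $ j * u $ j \<le> s"
  shows "x $ i \<le> (\<Sum>j\<in>UNIV. x $ j) * (\<Sum>j\<in>UNIV. 1 / x $ j) * s"
proof -
  have x_pos: "0 < x $ j" for j
    using x by (simp add: pos_vec_def)
  have "1 = (\<Sum>j\<in>UNIV. u $ j)"
    using u by (simp add: unit_simplex_def)
  also have "\<dots> \<le> (\<Sum>j\<in>UNIV. s * (1 / x $ j))"
    using s x_pos by (intro sum_mono) (simp add: le_divide_eq mult.commute)
  finally have "1 \<le> s * (\<Sum>j\<in>UNIV. 1 / x $ j)"
    by (simp add: sum_distrib_left)
  have "x $ i \<le> (\<Sum>j\<in>UNIV. x $ j)"
    using x_pos by (intro member_le_sum) (auto simp: less_imp_le)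
  also have "\<dots> \<le> (\<Sum>j\<in>UNIV. x $ j) * (s * (\<Sum>j\<in>UNIV. 1 / x $ j))"
    using mult_left_mono[OF \<open>1 \<le> s * (\<Sum>j\<in>UNIV. 1 / x $ j)\<close>, of "\<Sum>j\<in>UNIV. x $ j"] x_pos
    by (simp add: sum_nonneg less_imp_le)
  finally show ?thesis
    by (simp add: ac_simps)
qed

definition cw_ratio :: "(real ^ 'n::finite \<Rightarrow> real ^ 'n) \<Rightarrow> real ^ 'n \<Rightarrow> real" where
  "cw_ratio f x = Min (range (\<lambda>i. f x $ i / x $ i))"

lemma cw_ratio_le: "cw_ratio f x \<le> f x $ i / x $ i"
  unfolding cw_ratio_def by simp

lemma cw_ratio_greatest: "(\<And>i. c \<le> f x $ i / x $ i) \<Longrightarrow> c \<le> cw_ratio f x"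
  unfolding cw_ratio_def by (rule Min.boundedI) auto

lemma cw_lambda_eq_Sup_cw_ratio: "cw_lambda f = Sup (cw_ratio f ` {x. pos_vec x})"
  unfolding cw_lambda_def cw_ratio_def by (simp add: setcompr_eq_image)

locale order_preserving_homogeneous =
  fixes f :: "real ^ 'n::finite \<Rightarrow> real ^ 'n"
  assumes maps_pos: "maps_pos f"
    and order_preserving: "order_preserving f"
    and homogeneous: "homogeneous f"
begin

lemma pos_component: "pos_vec x \<Longrightarrow> 0 < f x $ i"
  using maps_pos unfolding maps_pos_def pos_vec_def by blast

lemma mono_component:
  "pos_vec x \<Longrightarrow> pos_vec y \<Longrightarrow> (\<And>j. x $ j \<le> y $ j) \<Longrightarrow> f x $ i \<le> f y $ i"
  using order_preserving unfolding order_preserving_def by blast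

lemma scale_component: "pos_vec x \<Longrightarrow> 0 < t \<Longrightarrow> f (t *s x) $ i = t * f x $ i"
  using homogeneous unfolding homogeneous_def by simp

lemma component_relative_dist_le:
  assumes x: "pos_vec x" and x': "pos_vec x'" and \<delta>: "0 \<le> \<delta>" "\<delta> < 1"
    and close: "\<And>j. \<bar>x' $ j - x $ j\<bar> \<le> \<delta> * x $ j"
  shows "\<bar>f x' $ i - f x $ i\<bar> \<le> \<delta> * f x $ i"
proof -
  have "(1 - \<delta>) * f x $ i = f ((1 - \<delta>) *s x) $ i"
    using scale_component[OF x, of "1 - \<delta>" i] \<delta> by simp
  also have "\<dots> \<le> f x' $ i"
    using close by (intro mono_component pos_vec_scale x x') (use \<delta> in \<open>auto simp: abs_le_iff algebra_simps\<close>)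
  finally have lower: "(1 - \<delta>) * f x $ i \<le> f x' $ i" .
  have "f x' $ i \<le> f ((1 + \<delta>) *s x) $ i"
    using close by (intro mono_component pos_vec_scale x x') (use \<delta> in \<open>auto simp: abs_le_iff algebra_simps\<close>)
  also have "\<dots> = (1 + \<delta>) * f x $ i"
    using scale_component[OF x, of "1 + \<delta>" i] \<delta> by simp
  finally show ?thesis
    using lower by (simp add: abs_le_iff algebra_simps)
qed

lemma continuous_on_pos_cone: "continuous_on {x. pos_vec x} f"
proof -
  have "continuous_on {x. pos_vec x} (\<lambda>x. f x $ i)" for i
    unfolding continuous_on_iff
  proof (intro ballI allI impI)
    fix x :: "real ^ 'n" and \<epsilon> :: real
    assume "x \<in> {x. pos_vec x}" and \<epsilon>: "0 < \<epsilon>"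
    then have x: "pos_vec x" by simp
    define \<delta> where "\<delta> = min (1/2) (\<epsilon> / (2 * f x $ i))"
    define m where "m = Min (range (($) x))"
    have \<delta>: "0 < \<delta>" "\<delta> < 1" "\<delta> * f x $ i < \<epsilon>"
      using pos_component[OF x, of i] \<epsilon> by (auto simp: \<delta>_def min_def field_simps)
    have m: "0 < m" "\<And>j. m \<le> x $ j"
      using x by (auto simp: m_def pos_vec_def)
    show "\<exists>d>0. \<forall>x'\<in>{x. pos_vec x}. dist x' x < d \<longrightarrow> dist (f x' $ i) (f x $ i) < \<epsilon>"
    proof (intro exI[of _ "\<delta> * m"] conjI ballI impI)
      show "0 < \<delta> * m"
        using \<delta> m by simp
      fix x' assume "x' \<in> {x. pos_vec x}" and dist: "dist x' x < \<delta> * m"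
      have "\<bar>x' $ j - x $ j\<bar> \<le> \<delta> * x $ j" for j
      proof -
        have "\<bar>x' $ j - x $ j\<bar> \<le> dist x' x"
          using component_le_norm_cart[of "x' - x" j] by (simp add: dist_norm)
        also have "\<dots> \<le> \<delta> * x $ j"
          using dist mult_left_mono[OF m(2)[of j] less_imp_le[OF \<delta>(1)]] by linarith
        finally show ?thesis .
      qed
      then have "\<bar>f x' $ i - f x $ i\<bar> \<le> \<delta> * f x $ i"
        using x \<open>x' \<in> {x. pos_vec x}\<close> \<delta> by (intro component_relative_dist_le) auto
      then show "dist (f x' $ i) (f x $ i) < \<epsilon>"
        using \<delta> by (simp add: dist_real_def)
    qed
  qed
  then show ?thesis
    using continuous_on_vec_lambda[of "{x. pos_vec x}" "\<lambda>i x. f x $ i"] by simp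
qed

lemma cw_ratio_le_Max: "pos_vec x \<Longrightarrow> cw_ratio f x \<le> Max (range (($) (f 1)))"
proof -
  assume x: "pos_vec x"
  obtain k where k: "\<And>j. x $ j \<le> x $ k"
    using exists_argmax_finite[of "($) x"] by blast
  have xk: "0 < x $ k"
    using x by (simp add: pos_vec_def)
  have "f x $ k \<le> f (x $ k *s 1) $ k"
    using x k xk by (intro mono_component pos_vec_scale pos_vec_one) auto
  also have "\<dots> = x $ k * f 1 $ k"
    using scale_component[OF pos_vec_one xk] by simp
  finally have "f x $ k / x $ k \<le> f 1 $ k"
    using xk by (simp add: divide_le_eq mult.commute)
  also have "\<dots> \<le> Max (range (($) (f 1)))"
    by simp
  finally show ?thesis
    using cw_ratio_le[of f x k] by linarith
qed

lemma bdd_above_cw_ratio: "bdd_above (cw_ratio f ` {x. pos_vec x})"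
  using cw_ratio_le_Max by (auto intro!: bdd_aboveI)

lemma cw_ratio_le_cw_lambda: "pos_vec x \<Longrightarrow> cw_ratio f x \<le> cw_lambda f"
  unfolding cw_lambda_eq_Sup_cw_ratio by (rule cSUP_upper[OF _ bdd_above_cw_ratio]) simp

lemma less_cw_lambda_imp_less_cw_ratio:
  "c < cw_lambda f \<Longrightarrow> \<exists>x. pos_vec x \<and> c < cw_ratio f x"
  unfolding cw_lambda_eq_Sup_cw_ratio
  using less_cSUP_iff[OF _ bdd_above_cw_ratio] pos_vec_one by blast

lemma cw_ratio_pos:
  assumes "pos_vec x"
  shows "0 < cw_ratio f x"
  using assms pos_component[OF assms] unfolding cw_ratio_def pos_vec_def by simp

lemma cw_lambda_pos: "0 < cw_lambda f"
  using cw_ratio_le_cw_lambda[OF pos_vec_one] cw_ratio_pos[OF pos_vec_one] by simp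

definition perturbed_eigenpair :: "real \<Rightarrow> real ^ 'n \<Rightarrow> real \<Rightarrow> bool" where
  "perturbed_eigenpair e u \<rho> \<longleftrightarrow> 0 < e \<and> u \<in> unit_simplex \<and> (\<forall>i. 0 < u $ i) \<and>
     f (shifted_recip e u) = (\<chi> i. \<rho> / u $ i)"

lemma perturbed_eigenpair_exists:
  assumes e: "0 < e"
  shows "\<exists>u \<rho>. perturbed_eigenpair e u \<rho>"
proof -
  define g where "g u = (\<chi> i. 1 / f (shifted_recip e u) $ i)" for u
  have "continuous_on unit_simplex (shifted_recip e)"
    unfolding shifted_recip_def
    by (intro continuous_intros continuous_on_component)
      (use e in \<open>auto simp: unit_simplex_def add_nonneg_pos less_imp_neq[symmetric]\<close>)
  then have "continuous_on unit_simplex (\<lambda>u. f (shifted_recip e u))"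
    by (rule continuous_on_compose2[OF continuous_on_pos_cone])
      (use pos_vec_shifted_recip[OF e] in auto)
  moreover have f_pos: "0 < f (shifted_recip e u) $ i" if "u \<in> unit_simplex" for u i
    using pos_component[OF pos_vec_shifted_recip[OF e that]] .
  ultimately have "continuous_on unit_simplex g"
    unfolding g_def
    by (intro continuous_intros continuous_on_component) (use f_pos in \<open>metis less_irrefl\<close>)+
  moreover have g_pos: "0 < g u $ i" if "u \<in> unit_simplex" for u i
    using f_pos[OF that] by (simp add: g_def)
  ultimately obtain u s where u: "u \<in> unit_simplex" and s: "0 < s" and "g u = s *s u"
    by (rule brouwer_unit_simplex_eigenvector)
  then have gu: "g u $ i = s * u $ i" for i
    by simp
  have u_pos: "0 < u $ i" for i
    using g_pos[OF u, of i] s by (simp add: gu zero_less_mult_iff)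
  have "f (shifted_recip e u) $ i = (1 / s) / u $ i" for i
    using gu[of i] f_pos[OF u, of i] s u_pos[of i]
    by (simp add: g_def field_simps)
  then have "perturbed_eigenpair e u (1 / s)"
    using e u u_pos by (simp add: perturbed_eigenpair_def vec_eq_iff)
  then show ?thesis
    by blast
qed

lemma perturbed_eigenpairD:
  assumes "perturbed_eigenpair e u \<rho>"
  shows "0 < e" and "u \<in> unit_simplex" and "0 < u $ i"
    and "f (shifted_recip e u) $ i = \<rho> / u $ i"
  using assms by (auto simp: perturbed_eigenpair_def)

lemma perturbed_eigenvalue_pos:
  assumes "perturbed_eigenpair e u \<rho>"
  shows "0 < \<rho>"
proof -
  have "0 < \<rho> / u $ i"
    using pos_component[OF pos_vec_shifted_recip[OF perturbed_eigenpairD(1,2)[OF assms]]]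
    by (simp add: perturbed_eigenpairD(4)[OF assms])
  then show ?thesis
    by (simp add: pos_less_divide_eq[OF perturbed_eigenpairD(3)[OF assms]])
qed

lemma perturbed_eigenvalue_le_cw_lambda:
  assumes "perturbed_eigenpair e u \<rho>"
  shows "\<rho> \<le> cw_lambda f"
proof -
  note e = perturbed_eigenpairD(1)[OF assms] and u = perturbed_eigenpairD(2)[OF assms]
    and u_pos = perturbed_eigenpairD(3)[OF assms] and eq = perturbed_eigenpairD(4)[OF assms]
  have "\<rho> \<le> f (shifted_recip e u) $ i / shifted_recip e u $ i" for i
  proof -
    have "f (shifted_recip e u) $ i / shifted_recip e u $ i = \<rho> + \<rho> * e / u $ i"
      using eq[of i] u_pos[of i] e by (simp add: shifted_recip_def field_simps)
    moreover have "0 \<le> \<rho> * e / u $ i"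
      using perturbed_eigenvalue_pos[OF assms] e u_pos[of i] by simp
    ultimately show ?thesis
      by linarith
  qed
  then have "\<rho> \<le> cw_ratio f (shifted_recip e u)"
    by (rule cw_ratio_greatest)
  also have "\<dots> \<le> cw_lambda f"
    by (rule cw_ratio_le_cw_lambda[OF pos_vec_shifted_recip[OF e u]])
  finally show ?thesis .
qed

lemma cw_ratio_le_perturbed_eigenvalue:
  assumes eig: "perturbed_eigenpair e u \<rho>" and x: "pos_vec x"
  shows "cw_ratio f x \<le> (1 + e * ((\<Sum>j\<in>UNIV. x $ j) * (\<Sum>j\<in>UNIV. 1 / x $ j))) * \<rho>"
proof -
  note e = perturbed_eigenpairD(1)[OF eig] and u = perturbed_eigenpairD(2)[OF eig]
    and u_pos = perturbed_eigenpairD(3)[OF eig] and eq = perturbed_eigenpairD(4)[OF eig]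
  define C where "C = (\<Sum>j\<in>UNIV. x $ j) * (\<Sum>j\<in>UNIV. 1 / x $ j)"
  obtain k where k: "\<And>j. x $ j * u $ j \<le> x $ k * u $ k"
    using exists_argmax_finite[of "\<lambda>j. x $ j * u $ j"] by blast
  define s where "s = x $ k * u $ k"
  have x_pos: "0 < x $ j" for j
    using x by (simp add: pos_vec_def)
  have s_pos: "0 < s"
    using x_pos u_pos by (simp add: s_def)
  have C_pos: "0 < C"
    using x_pos by (simp add: C_def sum_pos)
  have scale_pos: "0 < (1 + e * C) * s"
    using e C_pos s_pos by (simp add: add_pos_pos)
  \<comment> \<open>\<open>z\<close> dominates \<open>x\<close>, and at the index \<open>k\<close> maximising \<open>x\<^sub>j u\<^sub>j\<close>
    it exceeds \<open>x\<^sub>k\<close> only by the factor \<open>1 + e C\<close>.\<close>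
  define z where "z = ((1 + e * C) * s) *s shifted_recip e u"
  have z: "pos_vec z"
    unfolding z_def by (intro pos_vec_scale pos_vec_shifted_recip e u scale_pos)
  have "x $ j \<le> z $ j" for j
  proof -
    have "x $ j * (u $ j + e) = x $ j * u $ j + e * x $ j"
      by (simp add: algebra_simps)
    also have "\<dots> \<le> s + e * (C * s)"
      using k[of j] component_le_sum_mult_sum_inverse[OF x u k, of j] e
      by (intro add_mono mult_left_mono) (simp_all add: s_def C_def)
    finally have "x $ j * (u $ j + e) \<le> (1 + e * C) * s"
      by (simp add: algebra_simps)
    then show ?thesis
      using add_pos_pos[OF u_pos[of j] e] by (simp add: z_def shifted_recip_def le_divide_eq)
  qed
  then have "f x $ k \<le> f z $ k"
    by (intro mono_component x z)
  also have "\<dots> = (1 + e * C) * s * (\<rho> / u $ k)"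
    unfolding z_def by (simp add: scale_component[OF pos_vec_shifted_recip[OF e u] scale_pos] eq)
  also have "\<dots> = (1 + e * C) * \<rho> * x $ k"
    using u_pos[of k] by (simp add: s_def)
  finally have "f x $ k / x $ k \<le> (1 + e * C) * \<rho>"
    using x_pos[of k] by (simp add: divide_le_eq)
  then show ?thesis
    using cw_ratio_le[of f x k] by (simp add: C_def)
qed

lemma perturbed_eigenvalues_tendsto_cw_lambda:
  assumes eig: "\<And>k. perturbed_eigenpair (e k) (u k) (\<rho> k)" and e: "e \<longlonglongrightarrow> 0"
  shows "\<rho> \<longlonglongrightarrow> cw_lambda f"
proof (rule order_tendstoI)
  fix a assume "a < cw_lambda f"
  then obtain x where x: "pos_vec x" and a: "a < cw_ratio f x"
    using less_cw_lambda_imp_less_cw_ratio by blast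
  define C where "C = (\<Sum>j\<in>UNIV. x $ j) * (\<Sum>j\<in>UNIV. 1 / x $ j)"
  have C: "0 \<le> C"
    using x by (simp add: C_def pos_vec_def sum_nonneg less_imp_le)
  have "(\<lambda>k. cw_ratio f x / (1 + e k * C)) \<longlonglongrightarrow> cw_ratio f x / (1 + 0 * C)"
    by (intro tendsto_intros e) simp
  then have "\<forall>\<^sub>F k in sequentially. a < cw_ratio f x / (1 + e k * C)"
    by (rule order_tendstoD(1)) (use a in simp)
  then show "\<forall>\<^sub>F k in sequentially. a < \<rho> k"
  proof (rule eventually_mono)
    fix k assume "a < cw_ratio f x / (1 + e k * C)"
    moreover have "0 < 1 + e k * C"
      using perturbed_eigenpairD(1)[OF eig[of k]] C by (simp add: add_pos_nonneg)
    then have "cw_ratio f x / (1 + e k * C) \<le> \<rho> k"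
      using cw_ratio_le_perturbed_eigenvalue[OF eig[of k] x, folded C_def]
      by (simp add: divide_le_eq mult.commute)
    ultimately show "a < \<rho> k"
      by linarith
  qed
next
  fix a assume "cw_lambda f < a"
  then have "\<rho> k < a" for k
    using perturbed_eigenvalue_le_cw_lambda[OF eig[of k]] by linarith
  then show "\<forall>\<^sub>F k in sequentially. \<rho> k < a"
    by (intro always_eventually allI)
qed

end

locale perturbed_eigenpair_limit =
  order_preserving_homogeneous f for f :: "real ^ 'n::finite \<Rightarrow> real ^ 'n" +
  fixes v :: "real ^ 'n" and u :: "nat \<Rightarrow> real ^ 'n" and e \<rho> :: "nat \<Rightarrow> real"
  assumes limit_simplex: "v \<in> unit_simplex"
    and eigenpair: "\<And>k. perturbed_eigenpair (e k) (u k) (\<rho> k)"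
    and vector_lim: "u \<longlonglongrightarrow> v" and shift_lim: "e \<longlonglongrightarrow> 0"
    and eigenvalue_lim: "\<rho> \<longlonglongrightarrow> cw_lambda f"
begin

lemma limit_nonneg: "0 \<le> v $ j"
  using limit_simplex by (simp add: unit_simplex_def)

lemma component_tendsto: "(\<lambda>k. u k $ j) \<longlonglongrightarrow> v $ j"
  using tendsto_vec_nth[OF vector_lim] .

lemma shifted_component_tendsto: "(\<lambda>k. u k $ j + e k) \<longlonglongrightarrow> v $ j"
  using tendsto_add[OF component_tendsto shift_lim] by simp

lemma shifted_component_pos: "0 < u k $ j + e k"
  by (rule add_pos_pos[OF perturbed_eigenpairD(3,1)[OF eigenpair]])

lemma component_mult_le_cw_lambda:
  assumes x: "pos_vec x" and below: "\<And>j. x $ j * v $ j \<le> 1"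
  shows "f x $ i * v $ i \<le> cw_lambda f"
proof (rule field_le_mult_one_interval)
  fix t :: real assume t: "0 < t" "t < 1"
  have "\<forall>\<^sub>F k in sequentially. \<forall>j. t * x $ j * (u k $ j + e k) < 1"
  proof (rule eventually_all_finite)
    fix j
    have "(\<lambda>k. t * x $ j * (u k $ j + e k)) \<longlonglongrightarrow> t * x $ j * v $ j"
      by (intro tendsto_intros shifted_component_tendsto)
    moreover have "t * x $ j * v $ j < 1"
    proof -
      have "t * (x $ j * v $ j) \<le> t"
        using mult_left_mono[OF below[of j] less_imp_le[OF t(1)]] by simp
      then show ?thesis
        using t(2) by (simp add: mult.assoc)
    qed
    ultimately show "\<forall>\<^sub>F k in sequentially. t * x $ j * (u k $ j + e k) < 1"
      by (rule order_tendstoD(2))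
  qed
  then have "\<forall>\<^sub>F k in sequentially. t * f x $ i * u k $ i \<le> \<rho> k"
  proof (rule eventually_mono)
    fix k assume "\<forall>j. t * x $ j * (u k $ j + e k) < 1"
    then have "(t *s x) $ j \<le> shifted_recip (e k) (u k) $ j" for j
      using shifted_component_pos[of k j]
      by (simp add: shifted_recip_def le_divide_eq less_imp_le)
    then have "f (t *s x) $ i \<le> f (shifted_recip (e k) (u k)) $ i"
      using perturbed_eigenpairD(1,2)[OF eigenpair[of k]]
      by (intro mono_component pos_vec_scale pos_vec_shifted_recip x t)
    then show "t * f x $ i * u k $ i \<le> \<rho> k"
      using perturbed_eigenpairD(3,4)[OF eigenpair[of k]]
      by (simp add: scale_component[OF x t(1)] le_divide_eq)
  qed
  then have "t * f x $ i * v $ i \<le> cw_lambda f"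
    by (rule tendsto_le[OF trivial_limit_sequentially eigenvalue_lim, rotated])
      (intro tendsto_intros component_tendsto)
  then show "t * (f x $ i * v $ i) \<le> cw_lambda f"
    by (simp add: mult.assoc)
qed

lemma eventually_limit_le_scaled_shift:
  assumes t: "1 < t"
  shows "\<forall>\<^sub>F k in sequentially. \<forall>j. v $ j \<le> t * (u k $ j + e k)"
proof (rule eventually_all_finite)
  fix j
  show "\<forall>\<^sub>F k in sequentially. v $ j \<le> t * (u k $ j + e k)"
  proof (cases "v $ j = 0")
    case True
    then show ?thesis
      using shifted_component_pos t by (intro always_eventually allI) (simp add: less_imp_le)
  next
    case False
    have "(\<lambda>k. t * (u k $ j + e k)) \<longlonglongrightarrow> t * v $ j"
      by (intro tendsto_intros shifted_component_tendsto)
    moreover have "v $ j < t * v $ j"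
      using False limit_nonneg[of j] t by simp
    ultimately show ?thesis
      by (rule order_tendstoD(1)[THEN eventually_mono]) simp
  qed
qed

lemma exists_component_greater:
  assumes c: "c * v $ i < cw_lambda f"
  shows "\<exists>x. pos_vec x \<and> (\<forall>j. x $ j * v $ j \<le> 1) \<and> c < f x $ i"
proof -
  obtain t where t: "1 < t" and ct: "c * v $ i * t < cw_lambda f"
    using exists_gt_one_mult_less[OF c] by blast
  note eventually_limit_le_scaled_shift[OF t]
  moreover have "\<forall>\<^sub>F k in sequentially. c * t * u k $ i < \<rho> k"
  proof -
    have "(\<lambda>k. \<rho> k - c * t * u k $ i) \<longlonglongrightarrow> cw_lambda f - c * t * v $ i"
      by (intro tendsto_intros eigenvalue_lim component_tendsto)
    then have "\<forall>\<^sub>F k in sequentially. 0 < \<rho> k - c * t * u k $ i"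
      by (rule order_tendstoD(1)) (use ct in \<open>simp add: ac_simps\<close>)
    then show ?thesis
      by (rule eventually_mono) simp
  qed
  ultimately obtain k where below: "\<And>j. v $ j \<le> t * (u k $ j + e k)"
    and greater: "c * t * u k $ i < \<rho> k"
    using eventually_happens'[OF trivial_limit_sequentially eventually_conj] by blast
  define x where "x = (1 / t) *s shifted_recip (e k) (u k)"
  have "pos_vec x"
    unfolding x_def using perturbed_eigenpairD(1,2)[OF eigenpair[of k]] t
    by (intro pos_vec_scale pos_vec_shifted_recip) simp_all
  moreover have "x $ j * v $ j \<le> 1" for j
    using below[of j] shifted_component_pos[of k j] t
    by (simp add: x_def shifted_recip_def divide_le_eq)
  moreover have "c < f x $ i"
    using greater perturbed_eigenpairD(1-4)[OF eigenpair[of k]] t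
    by (simp add: x_def scale_component pos_vec_shifted_recip less_divide_eq mult.commute
        mult.left_commute)
  ultimately show ?thesis
    by blast
qed

lemma ext_map_inverse_limit:
  "ext_map f (\<chi> i. inverse (ereal (v $ i))) = (\<chi> i. ereal (cw_lambda f) * inverse (ereal (v $ i)))"
proof -
  define X where "X = {x. pos_vec x \<and> (\<forall>j. x $ j * v $ j \<le> 1)}"
  have "ereal a \<le> inverse (ereal (v $ j)) \<longleftrightarrow> a * v $ j \<le> 1" for a j
    using ereal_le_mult_inverse_iff[OF limit_nonneg[of j], of 1 a] by simp
  then have X_eq: "{x. pos_vec x \<and> (\<forall>j. ereal (x $ j) \<le> inverse (ereal (v $ j)))} = X"
    unfolding X_def by presburger
  have Sup_X: "(SUP x\<in>X. ereal (f x $ i)) = ereal (cw_lambda f) * inverse (ereal (v $ i))" for i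
  proof (rule SUP_eqI)
    fix x assume "x \<in> X"
    then have "f x $ i * v $ i \<le> cw_lambda f"
      by (intro component_mult_le_cw_lambda) (auto simp: X_def)
    then show "ereal (f x $ i) \<le> ereal (cw_lambda f) * inverse (ereal (v $ i))"
      by (rule ereal_le_mult_inverse_iff[OF limit_nonneg cw_lambda_pos, THEN iffD2])
  next
    fix z assume upper: "\<And>x. x \<in> X \<Longrightarrow> ereal (f x $ i) \<le> z"
    show "ereal (cw_lambda f) * inverse (ereal (v $ i)) \<le> z"
    proof (rule ccontr)
      assume "\<not> ?thesis"
      then have "z < ereal (cw_lambda f) * inverse (ereal (v $ i))"
        by (rule not_le[THEN iffD1])
      then obtain c where "z < ereal c" and "ereal c < ereal (cw_lambda f) * inverse (ereal (v $ i))"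
        using ereal_dense2 by blast
      moreover obtain x where "x \<in> X" and "ereal c < ereal (f x $ i)"
        using exists_component_greater[OF ereal_less_mult_inverse_iff[OF limit_nonneg cw_lambda_pos,
              THEN iffD1, OF calculation(2)]]
        by (auto simp: X_def)
      ultimately show False
        using upper by (meson leD less_trans)
    qed
  qed
  show ?thesis
    unfolding ext_map_def vec_lambda_beta X_eq by (simp only: Sup_X)
qed

end

context order_preserving_homogeneous
begin

lemma perturbed_eigenpairs_converge:
  obtains v u e \<rho> where "perturbed_eigenpair_limit f v u e \<rho>"
proof -
  have "\<forall>k. \<exists>u \<rho>. perturbed_eigenpair (inverse (real (Suc k))) u \<rho>"
    using perturbed_eigenpair_exists by simp
  then obtain U R where UR: "\<And>k. perturbed_eigenpair (inverse (real (Suc k))) (U k) (R k)"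
    by metis
  obtain v r where v: "v \<in> unit_simplex" and r: "strict_mono r" and lim: "(U \<circ> r) \<longlonglongrightarrow> v"
    using seq_compactE[OF compact_imp_seq_compact[OF compact_unit_simplex]]
      perturbed_eigenpairD(2)[OF UR] by metis
  define e where "e = (\<lambda>k. inverse (real (Suc k))) \<circ> r"
  have eig: "perturbed_eigenpair (e k) ((U \<circ> r) k) ((R \<circ> r) k)" for k
    using UR by (simp add: e_def)
  have e_lim: "e \<longlonglongrightarrow> 0"
    unfolding e_def by (rule LIMSEQ_subseq_LIMSEQ[OF LIMSEQ_inverse_real_of_nat r])
  have "perturbed_eigenpair_limit f v (U \<circ> r) e (R \<circ> r)"
    by unfold_locales (fact v eig lim e_lim perturbed_eigenvalues_tendsto_cw_lambda[OF eig e_lim])+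
  then show thesis
    by (rule that)
qed

end

theorem corollary2p7:
  fixes f :: "real ^ 'n::finite \<Rightarrow> real ^ 'n"
  assumes "maps_pos f" and "order_preserving f" and "homogeneous f"
  shows "\<exists>y :: ereal ^ 'n. (\<forall>i. 0 < y $ i) \<and> (\<exists>i. y $ i < \<infinity>) \<and>
           ext_map f y = (\<chi> i. ereal (cw_lambda f) * y $ i)"
proof -
  interpret order_preserving_homogeneous f
    using assms by unfold_locales
  obtain v u e \<rho> where "perturbed_eigenpair_limit f v u e \<rho>"
    by (rule perturbed_eigenpairs_converge)
  then interpret perturbed_eigenpair_limit f v u e \<rho> .
  define y where "y = (\<chi> i. inverse (ereal (v $ i)))"
  have "0 < y $ i" for i
    using limit_nonneg[of i] by (cases "v $ i = 0") (simp_all add: y_def)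
  moreover obtain i where "v $ i \<noteq> 0"
    using unit_simplex_nonzero_component[OF limit_simplex] by blast
  then have "y $ i < \<infinity>"
    by (simp add: y_def)
  moreover have "ext_map f y = (\<chi> i. ereal (cw_lambda f) * y $ i)"
    unfolding y_def vec_lambda_beta by (rule ext_map_inverse_limit)
  ultimately show ?thesis
    by blast
qed

end
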